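(* Let $k\subseteq K$ be algebraically closed fields, $X=\mathbb{A}^s$, $B=\mathbb{A}^t$, $Y\subseteq X\times B$ a constructible subset, and $A\subseteq X(K)$. Suppose there exist $\alpha,\beta\in A$ with the following property: for every $m\in\mathbb{N}$ and $i\le m$, letting $p^{(m)}_i\in X^m(K)$ be the $m$-tuple $(\alpha,\dots,\alpha,\beta,\alpha,\dots,\alpha)$ with $\beta$ in the $i$th place, and $P^{(m)}_i$ the $k$-Zariski closure of $\{p^{(m)}_i\}$, we have $p^{(m)}_i\notin P^{(m)}_j$ for all $i\neq j$. Then there are a natural number $n$ and a $k$-constructible set $Z\subseteq X\times X^n$ such that for every $b\in B(K)$ there is $a\in A^n$ with $Y_b(K)\cap A=Z_a(K)\cap A$.
   Context: For a set $Y\subseteq X\times B$ and $b\in B$, $Y_b=\{x\in X:(x,b)\in Y\}$ denotes the fibre; similarly $Z_a=\{x\in X:(x,a)\in Z\}$ for $a\in X^n$. The $k$-Zariski closure of a point is the smallest Zariski-closed set defined over $k$ containing it. *)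

theory Defs
  imports "HOL-Computational_Algebra.Polynomial"
begin

definition aspace :: "nat \<Rightarrow> 'a list set" where
  "aspace N = {x. length x = N}"

datatype 'a mpexpr = Var nat | Const 'a | Add "'a mpexpr" "'a mpexpr"
  | Mul "'a mpexpr" "'a mpexpr" | Neg "'a mpexpr"

fun mpeval :: "'a::comm_ring_1 mpexpr \<Rightarrow> 'a list \<Rightarrow> 'a" where
  "mpeval (Var i) x = (if i < length x then x ! i else 0)"
| "mpeval (Const c) x = c"
| "mpeval (Add p q) x = mpeval p x + mpeval q x"
| "mpeval (Mul p q) x = mpeval p x * mpeval q x"
| "mpeval (Neg p) x = - mpeval p x"

fun coeffs_in :: "'a set \<Rightarrow> 'a mpexpr \<Rightarrow> bool" where
  "coeffs_in k (Var i) = True"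
| "coeffs_in k (Const c) = (c \<in> k)"
| "coeffs_in k (Add p q) = (coeffs_in k p \<and> coeffs_in k q)"
| "coeffs_in k (Mul p q) = (coeffs_in k p \<and> coeffs_in k q)"
| "coeffs_in k (Neg p) = coeffs_in k p"

definition zariski_closed :: "'a::comm_ring_1 set \<Rightarrow> nat \<Rightarrow> 'a list set \<Rightarrow> bool" where
  "zariski_closed k N S \<longleftrightarrow> (\<exists>F. finite F \<and> (\<forall>p\<in>F. coeffs_in k p) \<and>
      S = {x \<in> aspace N. \<forall>p\<in>F. mpeval p x = 0})"

inductive constructible :: "'a::comm_ring_1 set \<Rightarrow> nat \<Rightarrow> 'a list set \<Rightarrow> bool"
  for k N where
  closed: "zariski_closed k N S \<Longrightarrow> constructible k N S"
| compl: "constructible k N S \<Longrightarrow> constructible k N (aspace N - S)"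
| union: "constructible k N S \<Longrightarrow> constructible k N T \<Longrightarrow> constructible k N (S \<union> T)"

definition zariski_closure_pt :: "'a::comm_ring_1 set \<Rightarrow> nat \<Rightarrow> 'a list \<Rightarrow> 'a list set" where
  "zariski_closure_pt k N p = \<Inter>{C. zariski_closed k N C \<and> p \<in> C}"

definition subfield :: "'a::field set \<Rightarrow> bool" where
  "subfield k \<longleftrightarrow> 0 \<in> k \<and> 1 \<in> k \<and> (\<forall>x\<in>k. \<forall>y\<in>k. x + y \<in> k \<and> x * y \<in> k)
     \<and> (\<forall>x\<in>k. - x \<in> k \<and> inverse x \<in> k)"

definition alg_closed_in :: "'a::field set \<Rightarrow> bool" where
  "alg_closed_in k \<longleftrightarrow> (\<forall>p :: 'a poly. set (coeffs p) \<subseteq> k \<and> degree p > 0 \<longrightarrow>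
      (\<exists>x\<in>k. poly p x = 0))"

definition fibre :: "nat \<Rightarrow> 'a list set \<Rightarrow> 'a list \<Rightarrow> 'a list set" where
  "fibre s Y b = {x \<in> aspace s. x @ b \<in> Y}"

text \<open>The m-tuple (alpha,...,alpha,beta,alpha,...,alpha) with beta in place i (1-based),
  as a point of X^m.\<close>
definition ptuple :: "nat \<Rightarrow> nat \<Rightarrow> 'a list \<Rightarrow> 'a list \<Rightarrow> 'a list" where
  "ptuple m i \<alpha> \<beta> = concat (map (\<lambda>j. if j = i then \<beta> else \<alpha>) [1..<Suc m])"

end

theory Submission
  imports Defs "Jordan_Normal_Form.Determinant"
begin

text \<open>Split a defining polynomial as \<open>p(x, b) = \<Sum>\<^sub>\<mu> c\<^sub>\<mu>(b) g\<^sub>\<mu>(x)\<close> with the \<open>g\<^sub>\<mu>\<close>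
  defined over \<open>k\<close>. The fibre of \<open>{p = 0}\<close> at \<open>b\<close> then meets \<open>A\<close> in the set \<open>S\<close> of those
  \<open>x \<in> A\<close> whose vector \<open>(g\<^sub>\<mu>(x))\<^sub>\<mu>\<close> is annihilated by \<open>(c\<^sub>\<mu>(b))\<^sub>\<mu>\<close>. If \<open>S\<close> is nonempty,
  choose \<open>w\<^sub>1, \<dots>, w\<^sub>r \<in> S\<close> with linearly independent vectors and \<open>r\<close> maximal: a point of \<open>A\<close>
  lies in \<open>S\<close> iff its vector lies in their span, and this is a \<open>k\<close>-constructible condition on
  \<open>(x, w\<^sub>1, \<dots>, w\<^sub>r)\<close>, expressed through minors. Parameter tuples are padded to a fixed length,
  and two distinct points \<open>\<alpha>, \<beta>\<close> of \<open>A\<close> serve as a flag that switches the set off when \<open>S\<close> is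
  empty. Boolean combinations are handled by concatenating parameter tuples.\<close>

section \<open>Polynomial functions and constructible sets\<close>

definition polyfun_over :: "'a::comm_ring_1 set \<Rightarrow> nat \<Rightarrow> ('a list \<Rightarrow> 'a) \<Rightarrow> bool" where
  "polyfun_over k N f \<longleftrightarrow> (\<exists>p. coeffs_in k p \<and> (\<forall>y\<in>aspace N. mpeval p y = f y))"

lemma polyfun_over_cong:
  "polyfun_over k N f \<Longrightarrow> (\<And>y. y \<in> aspace N \<Longrightarrow> f y = g y) \<Longrightarrow> polyfun_over k N g"
  unfolding polyfun_over_def by metis

lemma polyfun_over_const: "c \<in> k \<Longrightarrow> polyfun_over k N (\<lambda>y. c)"
  unfolding polyfun_over_def by (intro exI[of _ "Const c"]) auto

text \<open>Written as \<open>x\<^sub>0 - x\<^sub>0\<close>.\<close>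
lemma polyfun_over_zero: "polyfun_over k N (\<lambda>y. 0)"
  unfolding polyfun_over_def by (intro exI[of _ "Add (Var 0) (Neg (Var 0))"]) auto

lemma polyfun_over_nth: "i < N \<Longrightarrow> polyfun_over k N (\<lambda>y. y ! i)"
  unfolding polyfun_over_def aspace_def by (intro exI[of _ "Var i"]) auto

lemma polyfun_over_neg: "polyfun_over k N f \<Longrightarrow> polyfun_over k N (\<lambda>y. - f y)"
  unfolding polyfun_over_def by (metis coeffs_in.simps(5) mpeval.simps(5))

lemma polyfun_over_add:
  "polyfun_over k N f \<Longrightarrow> polyfun_over k N g \<Longrightarrow> polyfun_over k N (\<lambda>y. f y + g y)"
  unfolding polyfun_over_def by (metis coeffs_in.simps(3) mpeval.simps(3))

lemma polyfun_over_mult: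
  "polyfun_over k N f \<Longrightarrow> polyfun_over k N g \<Longrightarrow> polyfun_over k N (\<lambda>y. f y * g y)"
  unfolding polyfun_over_def by (metis coeffs_in.simps(4) mpeval.simps(4))

lemma polyfun_over_diff:
  "polyfun_over k N f \<Longrightarrow> polyfun_over k N g \<Longrightarrow> polyfun_over k N (\<lambda>y. f y - g y)"
  using polyfun_over_add[OF _ polyfun_over_neg, of k N f g] by simp

lemma polyfun_over_sum:
  "finite X \<Longrightarrow> (\<And>x. x \<in> X \<Longrightarrow> polyfun_over k N (f x)) \<Longrightarrow>
   polyfun_over k N (\<lambda>y. \<Sum>x\<in>X. f x y)"
  by (induction X rule: finite_induct) (auto intro: polyfun_over_zero polyfun_over_add)

lemma polyfun_over_prod:
  "finite X \<Longrightarrow> 1 \<in> k \<Longrightarrow> (\<And>x. x \<in> X \<Longrightarrow> polyfun_over k N (f x)) \<Longrightarrow>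
   polyfun_over k N (\<lambda>y. \<Prod>x\<in>X. f x y)"
  by (induction X rule: finite_induct) (auto intro: polyfun_over_const polyfun_over_mult)

lemma polyfun_over_det:
  assumes "1 \<in> k" and "\<And>i j. i < n \<Longrightarrow> j < n \<Longrightarrow> polyfun_over k N (f i j)"
  shows "polyfun_over k N (\<lambda>y. det (mat n n (\<lambda>(i,j). f i j y)))"
proof -
  have sign: "polyfun_over k N (\<lambda>y. signof p)" for p
    using polyfun_over_const[OF assms(1)] polyfun_over_neg[OF polyfun_over_const[OF assms(1)]]
    by (auto simp: sign_def)
  have "polyfun_over k N (\<lambda>y. \<Sum>p | p permutes {0..<n}. signof p * (\<Prod>i=0..<n. f i (p i) y))"
    using assms by (intro polyfun_over_sum polyfun_over_mult sign polyfun_over_prod)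
      (auto simp: finite_permutations permutes_in_image)
  then show ?thesis
    by (rule polyfun_over_cong)
      (subst det_def'[of _ n], auto intro!: sum.cong prod.cong simp: permutes_in_image)
qed

lemma polyfun_over_mpeval_coords:
  assumes "coeffs_in k p" and "\<And>i. i < L \<Longrightarrow> \<rho> i < N"
  shows "polyfun_over k N (\<lambda>y. mpeval p (map (\<lambda>i. y ! \<rho> i) [0..<L]))"
  using assms(1)
proof (induction p)
  case (Var j)
  then show ?case
    by (cases "j < L") (auto intro: polyfun_over_nth assms(2) polyfun_over_zero)
qed (auto intro: polyfun_over_const polyfun_over_add polyfun_over_mult polyfun_over_neg)

lemma constructible_aspace: "constructible k N (aspace N)"
  by (rule constructible.closed) (auto simp: zariski_closed_def intro!: exI[of _ "{}"])

lemma constructible_zero_set: "polyfun_over k N f \<Longrightarrow> constructible k N {y \<in> aspace N. f y = 0}"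
proof -
  assume "polyfun_over k N f"
  then obtain p where "coeffs_in k p" "\<forall>y\<in>aspace N. mpeval p y = f y"
    unfolding polyfun_over_def by blast
  then have "zariski_closed k N {y \<in> aspace N. f y = 0}"
    unfolding zariski_closed_def by (intro exI[of _ "{p}"]) auto
  then show ?thesis by (rule constructible.closed)
qed

lemma constructible_Collect_neg:
  "constructible k N {y \<in> aspace N. P y} \<Longrightarrow> constructible k N {y \<in> aspace N. \<not> P y}"
proof -
  assume "constructible k N {y \<in> aspace N. P y}"
  then have "constructible k N (aspace N - {y \<in> aspace N. P y})" by (rule constructible.compl)
  moreover have "aspace N - {y \<in> aspace N. P y} = {y \<in> aspace N. \<not> P y}" by blast
  ultimately show ?thesis by simp
qed

lemma constructible_Collect_disj:
  "constructible k N {y \<in> aspace N. P y} \<Longrightarrow> constructible k N {y \<in> aspace N. Q y} \<Longrightarrow>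
   constructible k N {y \<in> aspace N. P y \<or> Q y}"
  by (drule (1) constructible.union) (simp add: Collect_disj_eq Collect_conj_eq Int_Un_distrib)

lemma constructible_Collect_conj:
  "constructible k N {y \<in> aspace N. P y} \<Longrightarrow> constructible k N {y \<in> aspace N. Q y} \<Longrightarrow>
   constructible k N {y \<in> aspace N. P y \<and> Q y}"
proof -
  assume "constructible k N {y \<in> aspace N. P y}" "constructible k N {y \<in> aspace N. Q y}"
  then have "constructible k N {y \<in> aspace N. \<not> (\<not> P y \<or> \<not> Q y)}"
    by (intro constructible_Collect_neg constructible_Collect_disj)
  then show ?thesis by simp
qed

lemma constructible_Collect_bex:
  "finite X \<Longrightarrow> (\<And>x. x \<in> X \<Longrightarrow> constructible k N {y \<in> aspace N. P x y}) \<Longrightarrow>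
   constructible k N {y \<in> aspace N. \<exists>x\<in>X. P x y}"
proof (induction X rule: finite_induct)
  case empty
  then show ?case
    using constructible_Collect_neg[of k N "\<lambda>y. True"] constructible_aspace[of k N] by simp
next
  case (insert x X)
  then show ?case
    using constructible_Collect_disj[of k N "P x" "\<lambda>y. \<exists>x\<in>X. P x y"] by simp
qed

lemma constructible_Collect_ball:
  "finite X \<Longrightarrow> (\<And>x. x \<in> X \<Longrightarrow> constructible k N {y \<in> aspace N. P x y}) \<Longrightarrow>
   constructible k N {y \<in> aspace N. \<forall>x\<in>X. P x y}"
  using constructible_Collect_bex[of X k N "\<lambda>x y. \<not> P x y"]
    constructible_Collect_neg[of k N "\<lambda>y. \<exists>x\<in>X. \<not> P x y"]
  by (simp add: constructible_Collect_neg)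

lemma constructible_vimage_coords:
  assumes "constructible k L S" and "\<And>i. i < L \<Longrightarrow> \<rho> i < N"
  shows "constructible k N {y \<in> aspace N. map (\<lambda>i. y ! \<rho> i) [0..<L] \<in> S}"
  using assms(1)
proof (induction rule: constructible.induct)
  case (closed S)
  then obtain F where F: "finite F" "\<forall>p\<in>F. coeffs_in k p"
    and S: "S = {x \<in> aspace L. \<forall>p\<in>F. mpeval p x = 0}"
    unfolding zariski_closed_def by blast
  have "constructible k N {y \<in> aspace N. \<forall>p\<in>F. mpeval p (map (\<lambda>i. y ! \<rho> i) [0..<L]) = 0}"
    using F assms(2)
    by (intro constructible_Collect_ball constructible_zero_set polyfun_over_mpeval_coords) auto
  then show ?case by (simp add: S aspace_def)
next
  case (compl S)
  then show ?case using constructible_Collect_neg[OF compl.IH] by (simp add: aspace_def)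
next
  case (union S T)
  then show ?case by (auto dest: constructible_Collect_disj)
qed

lemma constructible_take:
  assumes "constructible k n Z" and "n \<le> N"
  shows "constructible k N {y \<in> aspace N. take n y \<in> Z}"
proof -
  have eq: "map (\<lambda>i. y ! i) [0..<n] = take n y" if "y \<in> aspace N" for y
    using that assms(2) by (intro nth_equalityI) (auto simp: aspace_def)
  have "{y \<in> aspace N. map (\<lambda>i. y ! i) [0..<n] \<in> Z} = {y \<in> aspace N. take n y \<in> Z}"
    by (simp add: eq cong: conj_cong)
  moreover have "constructible k N {y \<in> aspace N. map (\<lambda>i. y ! i) [0..<n] \<in> Z}"
    using assms by (intro constructible_vimage_coords) auto
  ultimately show ?thesis by simp
qed

lemma constructible_skip_block:
  assumes "constructible k (s + l) Z"
  shows "constructible k (s + m + l) {y \<in> aspace (s + m + l). take s y @ drop (s + m) y \<in> Z}"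
proof -
  have eq: "map (\<lambda>i. y ! (if i < s then i else i + m)) [0..<s + l] = take s y @ drop (s + m) y"
    if "y \<in> aspace (s + m + l)" for y
    using that by (intro nth_equalityI) (auto simp: aspace_def nth_append add.commute)
  have "{y \<in> aspace (s + m + l). map (\<lambda>i. y ! (if i < s then i else i + m)) [0..<s + l] \<in> Z} =
    {y \<in> aspace (s + m + l). take s y @ drop (s + m) y \<in> Z}"
    by (simp add: eq cong: conj_cong)
  moreover have "constructible k (s + m + l)
      {y \<in> aspace (s + m + l). map (\<lambda>i. y ! (if i < s then i else i + m)) [0..<s + l] \<in> Z}"
    using assms by (intro constructible_vimage_coords) auto
  ultimately show ?thesis by simp
qed

section \<open>Fibres definable with parameters from \<open>A\<close>\<close>

definition definable_fibres :: "'a::comm_ring_1 set \<Rightarrow> nat \<Rightarrow> nat \<Rightarrow> 'a list set \<Rightarrow> 'a list set \<Rightarrow> bool"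
  where "definable_fibres k s t A Y \<longleftrightarrow> (\<exists>n Z. constructible k (s + s * n) Z \<and>
     (\<forall>b\<in>aspace t. \<exists>a. length a = n \<and> set a \<subseteq> A \<and> fibre s Y b \<inter> A = fibre s Z (concat a) \<inter> A))"

lemma length_concat_aspace: "set a \<subseteq> aspace s \<Longrightarrow> length (concat a) = s * length a"
  by (induction a) (auto simp: aspace_def)

lemma definable_fibres_aspace: "definable_fibres k s t A (aspace (s + t))"
  unfolding definable_fibres_def using constructible_aspace[of k s]
  by (intro exI[of _ 0] exI[of _ "aspace s"]) (auto simp: fibre_def aspace_def)

lemma definable_fibres_diff:
  assumes A: "A \<subseteq> aspace s" and Y: "definable_fibres k s t A Y"
  shows "definable_fibres k s t A (aspace (s + t) - Y)"
proof -
  obtain n Z where Z: "constructible k (s + s * n) Z"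
    and fib: "\<forall>b\<in>aspace t. \<exists>a. length a = n \<and> set a \<subseteq> A \<and> fibre s Y b \<inter> A = fibre s Z (concat a) \<inter> A"
    using Y unfolding definable_fibres_def by blast
  have "\<exists>a. length a = n \<and> set a \<subseteq> A \<and>
      fibre s (aspace (s + t) - Y) b \<inter> A = fibre s (aspace (s + s * n) - Z) (concat a) \<inter> A"
    if b: "b \<in> aspace t" for b
  proof -
    obtain a where a: "length a = n" "set a \<subseteq> A" "fibre s Y b \<inter> A = fibre s Z (concat a) \<inter> A"
      using fib b by blast
    have "length (concat a) = s * n" using a A length_concat_aspace by (metis order_trans)
    then have "fibre s (aspace (s + t) - Y) b \<inter> A = fibre s (aspace (s + s * n) - Z) (concat a) \<inter> A"
      using a(3) b A by (auto simp: fibre_def aspace_def)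
    with a show ?thesis by blast
  qed
  then show ?thesis
    unfolding definable_fibres_def using constructible.compl[OF Z] by blast
qed

lemma definable_fibres_Un:
  assumes A: "A \<subseteq> aspace s"
    and Y1: "definable_fibres k s t A Y1" and Y2: "definable_fibres k s t A Y2"
  shows "definable_fibres k s t A (Y1 \<union> Y2)"
proof -
  obtain n1 Z1 where Z1: "constructible k (s + s * n1) Z1"
    and fib1: "\<forall>b\<in>aspace t. \<exists>a. length a = n1 \<and> set a \<subseteq> A \<and> fibre s Y1 b \<inter> A = fibre s Z1 (concat a) \<inter> A"
    using Y1 unfolding definable_fibres_def by blast
  obtain n2 Z2 where Z2: "constructible k (s + s * n2) Z2"
    and fib2: "\<forall>b\<in>aspace t. \<exists>a. length a = n2 \<and> set a \<subseteq> A \<and> fibre s Y2 b \<inter> A = fibre s Z2 (concat a) \<inter> A"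
    using Y2 unfolding definable_fibres_def by blast
  define N where "N = s + s * n1 + s * n2"
  define Z where "Z = {y \<in> aspace N. take (s + s * n1) y \<in> Z1} \<union>
    {y \<in> aspace N. take s y @ drop (s + s * n1) y \<in> Z2}"
  have "constructible k N {y \<in> aspace N. take (s + s * n1) y \<in> Z1}"
    by (rule constructible_take[OF Z1]) (simp add: N_def)
  moreover have "constructible k N {y \<in> aspace N. take s y @ drop (s + s * n1) y \<in> Z2}"
    unfolding N_def by (rule constructible_skip_block[OF Z2])
  ultimately have "constructible k N Z" unfolding Z_def by (rule constructible.union)
  then have Z: "constructible k (s + s * (n1 + n2)) Z" by (simp add: N_def distrib_left add.assoc)
  have fib: "\<exists>a. length a = n1 + n2 \<and> set a \<subseteq> A \<and>
      fibre s (Y1 \<union> Y2) b \<inter> A = fibre s Z (concat a) \<inter> A"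
    if b: "b \<in> aspace t" for b
  proof -
    obtain a1 where a1: "length a1 = n1" "set a1 \<subseteq> A" "fibre s Y1 b \<inter> A = fibre s Z1 (concat a1) \<inter> A"
      using fib1 b by blast
    obtain a2 where a2: "length a2 = n2" "set a2 \<subseteq> A" "fibre s Y2 b \<inter> A = fibre s Z2 (concat a2) \<inter> A"
      using fib2 b by blast
    have l1: "length (concat a1) = s * n1" and l2: "length (concat a2) = s * n2"
      using a1 a2 A length_concat_aspace by (metis order_trans)+
    have "x @ concat (a1 @ a2) \<in> Z \<longleftrightarrow> x @ concat a1 \<in> Z1 \<or> x @ concat a2 \<in> Z2"
      if "length x = s" for x
      using that l1 l2 by (simp add: Z_def N_def aspace_def)
    then have "fibre s Z (concat (a1 @ a2)) = fibre s Z1 (concat a1) \<union> fibre s Z2 (concat a2)"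
      by (auto simp: fibre_def aspace_def)
    then have "fibre s (Y1 \<union> Y2) b \<inter> A = fibre s Z (concat (a1 @ a2)) \<inter> A"
      using a1(3) a2(3) by (auto simp: fibre_def)
    with a1 a2 show ?thesis by (intro exI[of _ "a1 @ a2"]) auto
  qed
  show ?thesis
    unfolding definable_fibres_def by (intro exI[of _ "n1 + n2"] exI[of _ Z] conjI Z ballI fib)
qed

lemma definable_fibres_Int:
  assumes "A \<subseteq> aspace s" "Y1 \<subseteq> aspace (s + t)" "Y2 \<subseteq> aspace (s + t)"
    and "definable_fibres k s t A Y1" "definable_fibres k s t A Y2"
  shows "definable_fibres k s t A (Y1 \<inter> Y2)"
proof -
  have "Y1 \<inter> Y2 = aspace (s + t) - ((aspace (s + t) - Y1) \<union> (aspace (s + t) - Y2))"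
    using assms(2,3) by blast
  then show ?thesis
    using assms by (simp add: definable_fibres_diff definable_fibres_Un)
qed

lemma definable_fibres_constructible:
  assumes A: "A \<subseteq> aspace s"
    and zero_sets: "\<And>p. definable_fibres k s t A {y \<in> aspace (s + t). mpeval p y = 0}"
    and Y: "constructible K (s + t) Y"
  shows "definable_fibres k s t A Y"
  using Y
proof (induction rule: constructible.induct)
  case (closed S)
  then obtain F where F: "finite F" and S: "S = {y \<in> aspace (s + t). \<forall>p\<in>F. mpeval p y = 0}"
    unfolding zariski_closed_def by blast
  have "definable_fibres k s t A {y \<in> aspace (s + t). \<forall>p\<in>F. mpeval p y = 0}"
    using F
  proof (induction F rule: finite_induct)
    case empty
    then show ?case using definable_fibres_aspace by (simp add: Collect_mem_eq)
  next
    case (insert p F)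
    have "{y \<in> aspace (s + t). \<forall>q\<in>insert p F. mpeval q y = 0} =
      {y \<in> aspace (s + t). mpeval p y = 0} \<inter> {y \<in> aspace (s + t). \<forall>q\<in>F. mpeval q y = 0}"
      by auto
    then show ?case
      using definable_fibres_Int[OF A _ _ zero_sets insert.IH] by auto
  qed
  then show ?case by (simp add: S)
next
  case (compl S)
  then show ?case using definable_fibres_diff[OF A] by blast
next
  case (union S T)
  then show ?case using definable_fibres_Un[OF A] by blast
qed

section \<open>Separating variables\<close>

text \<open>Each summand pairs a function of the last variables \<open>b\<close> with an expression in the
  first \<open>s\<close> variables \<open>x\<close>; all constants go to the \<open>b\<close>-side, so the \<open>x\<close>-side only
  involves the coefficient \<open>1\<close>.\<close>
fun split_vars :: "nat \<Rightarrow> 'a::comm_ring_1 mpexpr \<Rightarrow> (('a list \<Rightarrow> 'a) \<times> 'a mpexpr) list" where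
  "split_vars s (Var i) =
    (if i < s then [(\<lambda>b. 1, Var i)] else [(\<lambda>b. mpeval (Var (i - s)) b, Const 1)])"
| "split_vars s (Const c) = [(\<lambda>b. c, Const 1)]"
| "split_vars s (Add p q) = split_vars s p @ split_vars s q"
| "split_vars s (Mul p q) =
    [(\<lambda>b. fst u b * fst v b, Mul (snd u) (snd v)). u \<leftarrow> split_vars s p, v \<leftarrow> split_vars s q]"
| "split_vars s (Neg p) = [(\<lambda>b. - fst u b, snd u). u \<leftarrow> split_vars s p]"

lemma sum_list_concat_map: "sum_list (concat (map f xs)) = (\<Sum>x\<leftarrow>xs. sum_list (f x))"
  by (induction xs) auto

lemma mpeval_append_split_vars:
  "length x = s \<Longrightarrow> mpeval p (x @ b) = (\<Sum>u\<leftarrow>split_vars s p. fst u b * mpeval (snd u) x)"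
proof (induction p)
  case (Mul p q)
  let ?f = "\<lambda>u. fst u b * mpeval (snd u) x"
  have "mpeval (Mul p q) (x @ b) = (\<Sum>u\<leftarrow>split_vars s p. ?f u) * (\<Sum>v\<leftarrow>split_vars s q. ?f v)"
    using Mul by simp
  also have "\<dots> = (\<Sum>u\<leftarrow>split_vars s p. \<Sum>v\<leftarrow>split_vars s q. ?f u * ?f v)"
    by (simp add: sum_list_const_mult sum_list_mult_const)
  finally show ?case by (simp add: map_concat sum_list_concat_map o_def mult_ac)
next
  case (Neg p)
  then show ?case by (simp add: uminus_sum_list_map o_def)
qed (auto simp: nth_append)

lemma coeffs_in_split_vars: "1 \<in> k \<Longrightarrow> u \<in> set (split_vars s p) \<Longrightarrow> coeffs_in k (snd u)"
  by (induction p arbitrary: u) (auto split: if_splits)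

lemma mpeval_append_separated:
  fixes p :: "'a::comm_ring_1 mpexpr"
  assumes "1 \<in> k"
  obtains M :: nat and c g where "\<And>\<mu>. \<mu> < M \<Longrightarrow> coeffs_in k (g \<mu>)"
    and "\<And>x b. length x = s \<Longrightarrow> mpeval p (x @ b) = (\<Sum>\<mu><M. c \<mu> b * mpeval (g \<mu>) x)"
proof -
  let ?D = "split_vars s p"
  show ?thesis
  proof (rule that[where M = "length ?D" and c = "\<lambda>\<mu>. fst (?D ! \<mu>)" and g = "\<lambda>\<mu>. snd (?D ! \<mu>)"])
    show "coeffs_in k (snd (?D ! \<mu>))" if "\<mu> < length ?D" for \<mu>
      using coeffs_in_split_vars[OF assms] nth_mem[OF that] by blast
    show "mpeval p (x @ b) = (\<Sum>\<mu><length ?D. fst (?D ! \<mu>) b * mpeval (snd (?D ! \<mu>)) x)"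
      if "length x = s" for x b
      using mpeval_append_split_vars[OF that, of p b]
      by (simp add: sum_list_sum_nth atLeast0LessThan)
  qed
qed

section \<open>Minors and linear spans\<close>

lemma det_last_row_expansion:
  fixes R :: "nat \<Rightarrow> nat \<Rightarrow> 'a::comm_ring_1" and r :: nat
  defines "D v \<equiv> mat (Suc r) (Suc r) (\<lambda>(i,j). if i < r then R i j else v j)"
  shows "det (D v) = (\<Sum>j<Suc r. v j * cofactor (D (\<lambda>_. 0)) r j)"
proof -
  have "mat_delete (D v) r j = mat_delete (D (\<lambda>_. 0)) r j" for j
    unfolding mat_delete_def D_def by (rule eq_matI) auto
  then show ?thesis
    by (subst laplace_expansion_row[of _ "Suc r" r]) (auto simp: D_def cofactor_def)
qed

lemma det_last_row_sum:
  fixes R :: "nat \<Rightarrow> nat \<Rightarrow> 'a::comm_ring_1"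
  shows "det (mat (Suc r) (Suc r) (\<lambda>(i,j). if i < r then R i j else (\<Sum>\<mu>\<in>F. c \<mu> * w \<mu> j))) =
    (\<Sum>\<mu>\<in>F. c \<mu> * det (mat (Suc r) (Suc r) (\<lambda>(i,j). if i < r then R i j else w \<mu> j)))"
  unfolding det_last_row_expansion sum_distrib_left sum_distrib_right mult.assoc by (rule sum.swap)

lemma det_last_row_unit:
  fixes R :: "nat \<Rightarrow> nat \<Rightarrow> 'a::comm_ring_1"
  shows "det (mat (Suc r) (Suc r) (\<lambda>(i,j). if i < r then R i j else if j < r then 0 else d)) =
    d * det (mat r r (\<lambda>(i,j). R i j))"
proof -
  have "mat_delete (mat (Suc r) (Suc r) (\<lambda>(i,j). if i < r then R i j else 0)) r r =
    mat r r (\<lambda>(i,j). R i j)"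
    unfolding mat_delete_def by (rule eq_matI) auto
  then show ?thesis
    by (simp add: det_last_row_expansion[where v = "\<lambda>j. if j < r then 0 else d"] cofactor_def
        lessThan_Suc)
qed

definition minor :: "(nat \<Rightarrow> 'b \<Rightarrow> 'a::comm_ring_1) \<Rightarrow> 'b list \<Rightarrow> nat list \<Rightarrow> nat \<Rightarrow> 'a" where
  "minor g ws I r = det (mat r r (\<lambda>(i,j). g (I ! i) (ws ! j)))"

lemma minor_Nil: "minor g [] [] 0 = 1"
  by (simp add: minor_def det_def')

lemma minor_take: "r \<le> length ws \<Longrightarrow> minor g (take r ws) I r = minor g ws I r"
  unfolding minor_def by (intro arg_cong[where f = det] eq_matI) auto

lemma minor_nonzero_imp_distinct:
  assumes "minor g ws I (length I) \<noteq> 0"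
  shows "distinct I"
proof (rule ccontr)
  assume "\<not> distinct I"
  then obtain i j where ij: "i < length I" "j < length I" "i \<noteq> j" "I ! i = I ! j"
    by (metis distinct_conv_nth)
  let ?A = "mat (length I) (length I) (\<lambda>(i,j). g (I ! i) (ws ! j))"
  have "row ?A i = row ?A j" using ij by (auto intro!: eq_vecI)
  then have "det ?A = 0" by (intro det_identical_rows[OF _ ij(3) ij(1) ij(2)]) auto
  then show False using assms by (simp add: minor_def)
qed

lemma annihilator_bordered_minors:
  fixes g :: "nat \<Rightarrow> 'b \<Rightarrow> 'a::field"
  assumes I: "length I = r" and ws: "r \<le> length ws"
    and nonzero: "minor g ws I r \<noteq> 0"
    and bordered: "\<forall>\<mu><M. minor g (take r ws @ [x]) (I @ [\<mu>]) (Suc r) = 0"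
    and annihilates: "\<forall>j<r. (\<Sum>\<mu><M. c \<mu> * g \<mu> (ws ! j)) = 0"
  shows "(\<Sum>\<mu><M. c \<mu> * g \<mu> x) = 0"
proof -
  txt \<open>Put the \<open>c\<close>-combination of all rows as last row under the independent rows: the
    determinant vanishes by linearity, yet that row is \<open>(0, \<dots>, 0, \<Sum>\<mu><M. c \<mu> * g \<mu> x)\<close>.\<close>
  define E where "E \<mu> j = (if j < r then g \<mu> (ws ! j) else g \<mu> x)" for \<mu> j
  let ?R = "\<lambda>i j. E (I ! i) j"
  have "minor g (take r ws @ [x]) (I @ [\<mu>]) (Suc r) =
    det (mat (Suc r) (Suc r) (\<lambda>(i,j). if i < r then ?R i j else E \<mu> j))" for \<mu>
    unfolding minor_def using I ws
    by (intro arg_cong[where f = det] eq_matI) (auto simp: E_def nth_append)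
  then have "0 = det (mat (Suc r) (Suc r) (\<lambda>(i,j). if i < r then ?R i j else (\<Sum>\<mu><M. c \<mu> * E \<mu> j)))"
    using bordered by (simp add: det_last_row_sum)
  also have "\<dots> = det (mat (Suc r) (Suc r)
      (\<lambda>(i,j). if i < r then ?R i j else if j < r then 0 else (\<Sum>\<mu><M. c \<mu> * g \<mu> x)))"
    using annihilates by (intro arg_cong[where f = det] eq_matI) (auto simp: E_def)
  also have "\<dots> = (\<Sum>\<mu><M. c \<mu> * g \<mu> x) * det (mat r r (\<lambda>(i,j). ?R i j))"
    by (rule det_last_row_unit)
  also have "mat r r (\<lambda>(i,j). ?R i j) = mat r r (\<lambda>(i,j). g (I ! i) (ws ! j))"
    by (rule eq_matI) (auto simp: E_def)
  finally show ?thesis using nonzero by (simp add: minor_def)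
qed

text \<open>The vector \<open>(g \<mu> x)\<close>, \<open>\<mu> < M\<close>, lies in the span of the vectors of the first \<open>r\<close>
  points of \<open>ws\<close>: these are independent (a nonzero \<open>r \<times> r\<close> minor) and every bordered minor
  vanishes.\<close>
definition in_minor_span :: "(nat \<Rightarrow> 'b \<Rightarrow> 'a::comm_ring_1) \<Rightarrow> nat \<Rightarrow> 'b list \<Rightarrow> 'b \<Rightarrow> bool" where
  "in_minor_span g M ws x \<longleftrightarrow>
    (\<exists>r\<in>{..M}. \<exists>I\<in>{I. set I \<subseteq> {..<M} \<and> length I = r}. minor g ws I r \<noteq> 0 \<and>
      (\<forall>\<mu>\<in>{..<M}. minor g (take r ws @ [x]) (I @ [\<mu>]) (Suc r) = 0))"

lemma in_minor_span_annihilated: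
  fixes g :: "nat \<Rightarrow> 'b \<Rightarrow> 'a::field"
  assumes "in_minor_span g M ws x" and "length ws = M"
    and "\<forall>w\<in>set ws. (\<Sum>\<mu><M. c \<mu> * g \<mu> w) = 0"
  shows "(\<Sum>\<mu><M. c \<mu> * g \<mu> x) = 0"
proof -
  obtain r I where "r \<le> M" "length I = r" "minor g ws I r \<noteq> 0"
    "\<forall>\<mu><M. minor g (take r ws @ [x]) (I @ [\<mu>]) (Suc r) = 0"
    using assms(1) unfolding in_minor_span_def by auto
  then show ?thesis
    using assms(2,3) by (intro annihilator_bordered_minors[of I r ws g M x c]) auto
qed

lemma exists_minor_span_basis:
  fixes g :: "nat \<Rightarrow> 'b \<Rightarrow> 'a::field"
  assumes "w \<in> S"
  obtains ws where "length ws = M" "set ws \<subseteq> S" "\<And>x. x \<in> S \<Longrightarrow> in_minor_span g M ws x"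
proof -
  define R where "R = {r. \<exists>ws I. length ws = r \<and> set ws \<subseteq> S \<and> length I = r \<and>
    set I \<subseteq> {..<M} \<and> minor g ws I r \<noteq> 0}"
  have R_member: "r \<in> R \<longleftrightarrow> (\<exists>ws I. length ws = r \<and> set ws \<subseteq> S \<and> length I = r \<and>
    set I \<subseteq> {..<M} \<and> minor g ws I r \<noteq> 0)" for r
    unfolding R_def by simp
  have R_bounded: "R \<subseteq> {..M}"
  proof
    fix r assume "r \<in> R"
    then obtain ws I where "length I = r" "set I \<subseteq> {..<M}" "minor g ws I r \<noteq> 0"
      unfolding R_member by blast
    then show "r \<in> {..M}"
      using minor_nonzero_imp_distinct card_mono[of "{..<M}" "set I"] by (fastforce simp: distinct_card)
  qed
  have "0 \<in> R" unfolding R_member by (intro exI[of _ "[]"]) (simp add: minor_Nil)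
  then have "Max R \<in> R" and max: "\<And>r. r \<in> R \<Longrightarrow> r \<le> Max R"
    using R_bounded finite_subset[OF R_bounded] by (auto intro: Max_in)
  then obtain ws0 I where ws0: "length ws0 = Max R" "set ws0 \<subseteq> S"
    and I: "length I = Max R" "set I \<subseteq> {..<M}" "minor g ws0 I (Max R) \<noteq> 0"
    unfolding R_member by blast
  define ws where "ws = ws0 @ replicate (M - Max R) w"
  have "Max R \<le> M" using R_bounded \<open>Max R \<in> R\<close> by auto
  then have ws: "length ws = M" "set ws \<subseteq> S" "take (Max R) ws = ws0"
    using ws0 assms by (auto simp: ws_def)
  have "in_minor_span g M ws x" if "x \<in> S" for x
    unfolding in_minor_span_def
  proof (intro bexI conjI ballI)
    show "minor g ws I (Max R) \<noteq> 0"
      using I(3) minor_take[of "Max R" ws g I] ws \<open>Max R \<le> M\<close> by simp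
    show "minor g (take (Max R) ws @ [x]) (I @ [\<mu>]) (Suc (Max R)) = 0" if "\<mu> \<in> {..<M}" for \<mu>
    proof (rule ccontr)
      assume "minor g (take (Max R) ws @ [x]) (I @ [\<mu>]) (Suc (Max R)) \<noteq> 0"
      then have "Suc (Max R) \<in> R"
        using ws0 I \<open>x \<in> S\<close> that ws(3) unfolding R_member
        by (intro exI[of _ "ws0 @ [x]"] exI[of _ "I @ [\<mu>]"]) auto
      then show False using max by fastforce
    qed
  qed (use I \<open>Max R \<le> M\<close> in auto)
  with ws show ?thesis using that by blast
qed

section \<open>Zero sets of single polynomials\<close>

definition block :: "nat \<Rightarrow> 'a list \<Rightarrow> nat \<Rightarrow> 'a list" where
  "block s y j = take s (drop (s * j) y)"

lemma block_concat: "\<forall>z\<in>set zs. length z = s \<Longrightarrow> j < length zs \<Longrightarrow> block s (concat zs) j = zs ! j"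
proof (induction zs arbitrary: j)
  case (Cons z zs)
  then show ?case by (cases j) (auto simp: block_def)
qed simp

lemma polyfun_over_mpeval_block:
  assumes "coeffs_in k p" and "s * j + s \<le> N"
  shows "polyfun_over k N (\<lambda>y. mpeval p (block s y j))"
proof -
  have eq: "map (\<lambda>i. y ! (s * j + i)) [0..<s] = block s y j" if "y \<in> aspace N" for y
    using that assms(2) by (intro nth_equalityI) (auto simp: block_def aspace_def)
  have "polyfun_over k N (\<lambda>y. mpeval p (map (\<lambda>i. y ! (s * j + i)) [0..<s]))"
    using assms by (intro polyfun_over_mpeval_coords) auto
  then show ?thesis by (rule polyfun_over_cong) (simp add: eq)
qed

lemma polyfun_over_minor_blocks:
  assumes "1 \<in> k" and "length I = r" and "r \<le> length J"
    and "\<forall>\<mu>\<in>set I. coeffs_in k (g \<mu>)" and "\<forall>j\<in>set J. s * j + s \<le> N"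
  shows "polyfun_over k N (\<lambda>y. minor (\<lambda>\<mu>. mpeval (g \<mu>)) (map (block s y) J) I r)"
  unfolding minor_def
proof (rule polyfun_over_det[OF assms(1)])
  fix i j assume ij: "i < r" "j < r"
  then have "polyfun_over k N (\<lambda>y. mpeval (g (I ! i)) (block s y (J ! j)))"
    using assms(2-5) by (intro polyfun_over_mpeval_block) auto
  then show "polyfun_over k N (\<lambda>y. mpeval (g (I ! i)) (map (block s y) J ! j))"
    using ij assms(3) by simp
qed

text \<open>A point is read as \<open>x @ e\<^sub>1 @ e\<^sub>2 @ w\<^sub>1 @ \<dots> @ w\<^sub>M\<close>; choosing \<open>e\<^sub>1 = e\<^sub>2\<close> makes
  the fibre empty.\<close>
definition flagged_span_set :: "nat \<Rightarrow> (nat \<Rightarrow> 'a mpexpr) \<Rightarrow> nat \<Rightarrow> 'a::comm_ring_1 list set" where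
  "flagged_span_set s g M = {y \<in> aspace (s + s * (M + 2)). block s y 1 \<noteq> block s y 2 \<and>
     in_minor_span (\<lambda>\<mu>. mpeval (g \<mu>)) M (map (block s y) [3..<M + 3]) (block s y 0)}"

lemma constructible_flagged_span_set:
  fixes g :: "nat \<Rightarrow> 'a::comm_ring_1 mpexpr"
  assumes "1 \<in> k" and "\<And>\<mu>. \<mu> < M \<Longrightarrow> coeffs_in k (g \<mu>)"
  shows "constructible k (s + s * (M + 2)) (flagged_span_set s g M)"
proof -
  let ?N = "s + s * (M + 2)" and ?g = "\<lambda>\<mu>. mpeval (g \<mu>)"
  have bound: "\<forall>j\<in>set J. s * j + s \<le> ?N" if "set J \<subseteq> {..<M + 3}" for J
  proof
    fix j assume "j \<in> set J"
    then have "s * (j + 1) \<le> s * (M + 3)" using that by (intro mult_le_mono2) auto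
    then show "s * j + s \<le> ?N" by (simp add: algebra_simps)
  qed
  have coeffs: "\<forall>\<mu>\<in>set I. coeffs_in k (g \<mu>)" if "set I \<subseteq> {..<M}" for I
    using that assms(2) by auto
  have flag: "block s y 1 \<noteq> block s y 2 \<longleftrightarrow> \<not> (\<forall>j\<in>{..<s}. y ! (s + j) - y ! (2 * s + j) = 0)"
    if "y \<in> aspace ?N" for y :: "'a list"
    using that by (auto simp: block_def aspace_def list_eq_iff_nth_eq mult.commute)
  have "flagged_span_set s g M = {y \<in> aspace ?N.
      \<not> (\<forall>j\<in>{..<s}. y ! (s + j) - y ! (2 * s + j) = 0) \<and>
      (\<exists>r\<in>{..M}. \<exists>I\<in>{I. set I \<subseteq> {..<M} \<and> length I = r}.
        \<not> minor ?g (map (block s y) [3..<M + 3]) I r = 0 \<and>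
        (\<forall>\<mu>\<in>{..<M}. minor ?g (map (block s y) (take r [3..<M + 3] @ [0])) (I @ [\<mu>]) (Suc r) = 0))}"
    unfolding flagged_span_set_def in_minor_span_def using flag by (auto simp: take_map)
  also have "constructible k ?N \<dots>"
    using assms(1)
    by (intro constructible_Collect_conj constructible_Collect_neg constructible_Collect_ball
        constructible_Collect_bex constructible_zero_set polyfun_over_diff polyfun_over_nth
        polyfun_over_minor_blocks finite_lists_length_eq coeffs bound)
      (auto simp: algebra_simps)
  finally show ?thesis .
qed

lemma fibre_flagged_span_set:
  assumes A: "A \<subseteq> aspace s" and e: "e1 \<in> A" "e2 \<in> A" and ws: "set ws \<subseteq> A" "length ws = M"
  shows "fibre s (flagged_span_set s g M) (concat (e1 # e2 # ws)) \<inter> A =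
    {x \<in> A. e1 \<noteq> e2 \<and> in_minor_span (\<lambda>\<mu>. mpeval (g \<mu>)) M ws x}"
proof -
  have "x @ concat (e1 # e2 # ws) \<in> flagged_span_set s g M \<longleftrightarrow>
      e1 \<noteq> e2 \<and> in_minor_span (\<lambda>\<mu>. mpeval (g \<mu>)) M ws x" if x: "x \<in> A" for x
  proof -
    let ?zs = "x # e1 # e2 # ws"
    have lengths: "\<forall>z\<in>set ?zs. length z = s" and "set ?zs \<subseteq> aspace s"
      using A e ws x by (auto simp: aspace_def)
    then have "concat ?zs \<in> aspace (s + s * (M + 2))"
      using ws(2) length_concat_aspace[of ?zs s] by (simp add: aspace_def algebra_simps)
    moreover have "block s (concat ?zs) j = ?zs ! j" if "j < M + 3" for j
      using block_concat[OF lengths] that ws(2) by simp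
    moreover from this have "map (block s (concat ?zs)) [3..<M + 3] = ws"
      using ws(2) by (intro nth_equalityI) auto
    ultimately show ?thesis by (simp add: flagged_span_set_def)
  qed
  then show ?thesis using A by (auto simp: fibre_def)
qed

lemma definable_fibres_zero_set:
  fixes k :: "'a::field set" and p :: "'a mpexpr"
  assumes A: "A \<subseteq> aspace s" "\<alpha> \<in> A" "\<beta> \<in> A" "\<alpha> \<noteq> \<beta>" and "1 \<in> k"
  shows "definable_fibres k s t A {y \<in> aspace (s + t). mpeval p y = 0}"
proof -
  obtain M :: nat and c g where g: "\<And>\<mu>. \<mu> < M \<Longrightarrow> coeffs_in k (g \<mu>)"
    and p: "\<And>x b. length x = s \<Longrightarrow> mpeval p (x @ b) = (\<Sum>\<mu><M. c \<mu> b * mpeval (g \<mu>) x)"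
    by (rule mpeval_append_separated[OF \<open>1 \<in> k\<close>, where s = s and p = p]) blast
  let ?Z = "flagged_span_set s g M" and ?g = "\<lambda>\<mu>. mpeval (g \<mu>)"
  have fibres: "\<exists>a. length a = M + 2 \<and> set a \<subseteq> A \<and>
      fibre s {y \<in> aspace (s + t). mpeval p y = 0} b \<inter> A = fibre s ?Z (concat a) \<inter> A"
    if b: "b \<in> aspace t" for b
  proof -
    define S where "S = {x \<in> A. (\<Sum>\<mu><M. c \<mu> b * ?g \<mu> x) = 0}"
    have fibre_S: "fibre s {y \<in> aspace (s + t). mpeval p y = 0} b \<inter> A = S"
      using A(1) b p by (auto simp: S_def fibre_def aspace_def)
    have "S \<subseteq> A" by (auto simp: S_def)
    show ?thesis
    proof (cases "S = {}")
      case True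
      have \<alpha>s: "set (\<alpha> # \<alpha> # replicate M \<alpha>) \<subseteq> A" using A(2) by auto
      then have "fibre s ?Z (concat (\<alpha> # \<alpha> # replicate M \<alpha>)) \<inter> A = S"
        using fibre_flagged_span_set[OF A(1) A(2) A(2) _ length_replicate, of M \<alpha> g] True by simp
      with fibre_S \<alpha>s show ?thesis by (intro exI[of _ "\<alpha> # \<alpha> # replicate M \<alpha>"]) simp
    next
      case False
      then obtain w where "w \<in> S" by blast
      then obtain ws where ws: "length ws = M" "set ws \<subseteq> S" "\<And>x. x \<in> S \<Longrightarrow> in_minor_span ?g M ws x"
        by (rule exists_minor_span_basis[where M = M and g = ?g]) blast
      have "x \<in> S" if "x \<in> A" "in_minor_span ?g M ws x" for x
        using in_minor_span_annihilated[OF that(2) ws(1), of "\<lambda>\<mu>. c \<mu> b"] ws(2) that(1)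
        unfolding S_def by blast
      then have "{x \<in> A. \<alpha> \<noteq> \<beta> \<and> in_minor_span ?g M ws x} = S"
        using ws(3) \<open>S \<subseteq> A\<close> A(4) by blast
      moreover have \<alpha>\<beta>ws: "set (\<alpha> # \<beta> # ws) \<subseteq> A" using A(2,3) ws(2) \<open>S \<subseteq> A\<close> by auto
      ultimately have "fibre s ?Z (concat (\<alpha> # \<beta> # ws)) \<inter> A = S"
        using fibre_flagged_span_set[OF A(1) A(2) A(3) _ ws(1), of g] by simp
      with fibre_S \<alpha>\<beta>ws ws(1) show ?thesis by (intro exI[of _ "\<alpha> # \<beta> # ws"]) simp
    qed
  qed
  show ?thesis
    unfolding definable_fibres_def
    by (intro exI[of _ "M + 2"] exI[of _ ?Z] conjI ballI fibres constructible_flagged_span_set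
        \<open>1 \<in> k\<close> g)
qed

theorem lemma6p2:
  fixes k :: "'a::field set" and s t :: nat
    and Y :: "'a list set" and A :: "'a list set"
  assumes "subfield k" and "alg_closed_in k" and "alg_closed_in (UNIV :: 'a set)"
    and "constructible UNIV (s + t) Y"
    and "A \<subseteq> aspace s"
    and "\<alpha> \<in> A" and "\<beta> \<in> A"
    and "\<forall>m i j. 1 \<le> i \<and> i \<le> m \<and> 1 \<le> j \<and> j \<le> m \<and> i \<noteq> j \<longrightarrow>
           ptuple m i \<alpha> \<beta> \<notin> zariski_closure_pt k (s * m) (ptuple m j \<alpha> \<beta>)"
  shows "\<exists>n Z. constructible k (s + s * n) Z \<and>
           (\<forall>b \<in> aspace t. \<exists>a. length a = n \<and> set a \<subseteq> A \<and>
              fibre s Y b \<inter> A = fibre s Z (concat a) \<inter> A)"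
proof -
  have "1 \<in> k" using assms(1) by (simp add: subfield_def)
  have "\<alpha> \<noteq> \<beta>"
  proof
    assume "\<alpha> = \<beta>"
    then have "ptuple 2 1 \<alpha> \<beta> = ptuple 2 2 \<alpha> \<beta>" by (simp add: ptuple_def upt_rec)
    then show False
      using assms(8)[rule_format, of 1 2 2] by (simp add: zariski_closure_pt_def)
  qed
  have "definable_fibres k s t A Y"
    using definable_fibres_zero_set[OF assms(5-7) \<open>\<alpha> \<noteq> \<beta>\<close> \<open>1 \<in> k\<close>]
    by (rule definable_fibres_constructible[OF assms(5) _ assms(4)])
  then show ?thesis unfolding definable_fibres_def .
qed

end
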